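(* Let $\mu>0$, let $V^{*}_{\mu}$ be the fixed point of $\mathcal{B}_{\mu}$ and $V^{*}$ the fixed point of $\mathcal{B}$. Then $$\|V^{*}_{\mu}-V^{*}\|_{\infty}\le\frac{\mu\cdot\max\{|1-\mathbf{C}|,1\}}{1-\gamma}.$$
   Context: Markov decision process with state space $\mathcal{S}$, action space $\mathcal{A}\subseteq\mathbb{R}$, transition kernel $\mathbf{P}$, bounded reward $R(s',s,a)$, discount $\gamma\in[0,1)$. Standing assumption: all policies are conditional densities on $\mathcal{A}$ (w.r.t. Lebesgue measure) bounded by the constant $\mathbf{C}$; this class is $\Pi_{\mathbf{C}}$. For bounded $V$, $Q_V(s,a)=\mathbb{E}_{S'\sim\mathbf{P}(\cdot\mid s,a)}[R(S',s,a)+\gamma V(S')]$, $\mathcal{B}V(s)=\sup_{\pi\in\Pi_{\mathbf{C}}}\int_{\mathcal{A}}Q_V(s,a)\pi(a\mid s)\,da$, and $\mathcal{B}_{\mu}V(s)=\sup_{\pi\in\Pi_{\mathbf{C}}}\int_{\mathcal{A}}[Q_V(s,a)\pi(a\mid s)+\mu(\pi(a\mid s)-\pi(a\mid s)^2)]\,da$. *)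

theory Defs
  imports "HOL-Probability.Probability"
begin

definition dens_C :: "real set \<Rightarrow> real \<Rightarrow> (real \<Rightarrow> real) set" where
  "dens_C A C = {p. p \<in> borel_measurable lborel \<and> (\<forall>a\<in>A. 0 \<le> p a \<and> p a \<le> C)
                   \<and> set_integrable lborel A p \<and> (LINT a:A|lborel. p a) = 1}"

definition Pol :: "'s measure \<Rightarrow> real set \<Rightarrow> real \<Rightarrow> ('s \<Rightarrow> real \<Rightarrow> real) set" where
  "Pol M A C = {\<pi>. \<forall>s\<in>space M. \<pi> s \<in> dens_C A C}"

definition Qfun :: "('s \<Rightarrow> real \<Rightarrow> 's measure) \<Rightarrow> ('s \<Rightarrow> 's \<Rightarrow> real \<Rightarrow> real) \<Rightarrow> real
                     \<Rightarrow> ('s \<Rightarrow> real) \<Rightarrow> 's \<Rightarrow> real \<Rightarrow> real" where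
  "Qfun P R \<gamma> V s a = (\<integral>s'. R s' s a + \<gamma> * V s' \<partial>(P s a))"

definition Bop :: "'s measure \<Rightarrow> real set \<Rightarrow> real \<Rightarrow> ('s \<Rightarrow> real \<Rightarrow> 's measure)
                    \<Rightarrow> ('s \<Rightarrow> 's \<Rightarrow> real \<Rightarrow> real) \<Rightarrow> real \<Rightarrow> ('s \<Rightarrow> real) \<Rightarrow> 's \<Rightarrow> real" where
  "Bop M A C P R \<gamma> V s =
     (SUP \<pi>\<in>Pol M A C. LINT a:A|lborel. Qfun P R \<gamma> V s a * \<pi> s a)"

definition Bmu :: "'s measure \<Rightarrow> real set \<Rightarrow> real \<Rightarrow> ('s \<Rightarrow> real \<Rightarrow> 's measure)
                    \<Rightarrow> ('s \<Rightarrow> 's \<Rightarrow> real \<Rightarrow> real) \<Rightarrow> real \<Rightarrow> real \<Rightarrow> ('s \<Rightarrow> real) \<Rightarrow> 's \<Rightarrow> real" where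
  "Bmu M A C P R \<gamma> \<mu> V s =
     (SUP \<pi>\<in>Pol M A C. LINT a:A|lborel.
        Qfun P R \<gamma> V s a * \<pi> s a + \<mu> * (\<pi> s a - (\<pi> s a)\<^sup>2))"

end

theory Submission
  imports Defs
begin

(* The regularizer changes the objective of a policy with density p by
   mu * (1 - LINT p^2), and for a density bounded by C the integral of p^2 lies
   in [0, C]; hence B_mu V and B V differ by at most mu * max |1 - C| 1.
   Since Q_V - Q_W = gamma * E[V - W], the operator B is a gamma-contraction in the
   sup norm.  Writing D for sup |V*_mu - V*| and using the fixed point equations,
   D <= mu * max |1 - C| 1 + gamma * D, which rearranges to the claim. *)

lemma integral_measurable_subprob_algebra2:
  fixes f :: "'a \<Rightarrow> 'b \<Rightarrow> 'c::{banach, second_countable_topology}"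
  assumes f[measurable]: "(\<lambda>(x, y). f x y) \<in> borel_measurable (M \<Otimes>\<^sub>M N)"
    and L[measurable]: "L \<in> M \<rightarrow>\<^sub>M subprob_algebra N"
  shows "(\<lambda>x. integral\<^sup>L (L x) (f x)) \<in> borel_measurable M"
proof -
  note measurable_distr2[measurable]
  have "(\<lambda>x. integral\<^sup>L (distr (L x) (M \<Otimes>\<^sub>M N) (\<lambda>y. (x, y))) (\<lambda>(x, y). f x y))
          \<in> borel_measurable M"
    by measurable
  then show ?thesis
    by (rule measurable_cong[THEN iffD1, rotated])
       (auto simp: integral_distr subprob_measurableD(2)[OF L] cong: measurable_cong_sets)
qed

lemma (in prob_space) abs_integral_le_const:
  fixes f :: "'a \<Rightarrow> real"
  assumes f: "f \<in> borel_measurable M" and bound: "\<And>x. x \<in> space M \<Longrightarrow> \<bar>f x\<bar> \<le> c"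
  shows "integrable M f" and "\<bar>integral\<^sup>L M f\<bar> \<le> c"
proof -
  show int: "integrable M f"
    using f bound by (intro integrable_const_bound[where B=c]) auto
  have "integral\<^sup>L M f \<le> c" and "- c \<le> integral\<^sup>L M f"
    by (auto intro!: integral_le_const integral_ge_const int AE_I2 dest!: bound)
  then show "\<bar>integral\<^sup>L M f\<bar> \<le> c"
    by linarith
qed

lemma cSUP_abs_diff_le:
  fixes f g :: "'a \<Rightarrow> real"
  assumes S: "S \<noteq> {}" and g: "bdd_above (g ` S)"
    and close: "\<And>x. x \<in> S \<Longrightarrow> \<bar>f x - g x\<bar> \<le> e"
  shows "\<bar>(SUP x\<in>S. f x) - (SUP x\<in>S. g x)\<bar> \<le> e"
proof -
  have f: "bdd_above (f ` S)"
  proof -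
    from g obtain b where "\<And>x. x \<in> S \<Longrightarrow> g x \<le> b"
      by (auto simp: bdd_above_def)
    with close show ?thesis
      by (intro bdd_aboveI2[where M="b + e"]) (smt (verit))
  qed
  have "(SUP x\<in>S. f x) \<le> (SUP x\<in>S. g x) + e"
    using close cSUP_upper[OF _ g] by (intro cSUP_least[OF S]) (smt (verit))
  moreover have "(SUP x\<in>S. g x) \<le> (SUP x\<in>S. f x) + e"
    using close cSUP_upper[OF _ f] by (intro cSUP_least[OF S]) (smt (verit))
  ultimately show ?thesis
    by linarith
qed

lemma bound_from_contraction_inequality:
  fixes h :: "'a \<Rightarrow> real"
  assumes h: "bdd_above (h ` S)" and "\<gamma> < 1"
    and contraction: "\<And>D. \<forall>x\<in>S. h x \<le> D \<Longrightarrow> \<forall>x\<in>S. h x \<le> e + \<gamma> * D"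
  shows "\<forall>x\<in>S. h x \<le> e / (1 - \<gamma>)"
proof (cases "S = {}")
  case False
  define D where "D = (SUP x\<in>S. h x)"
  have upper: "\<forall>x\<in>S. h x \<le> D"
    unfolding D_def using h by (auto intro: cSUP_upper)
  have "D \<le> e + \<gamma> * D"
    unfolding D_def using contraction[OF upper] False by (intro cSUP_least) (auto simp: D_def)
  then have "D \<le> e / (1 - \<gamma>)"
    using \<open>\<gamma> < 1\<close> by (simp add: pos_le_divide_eq algebra_simps)
  with upper show ?thesis
    by fastforce
qed simp

lemma set_integrable_mult_density:
  fixes Q p :: "'a \<Rightarrow> real"
  assumes A: "A \<in> sets M" and Q: "Q \<in> borel_measurable (restrict_space M A)"
    and Q_bound: "\<And>a. a \<in> A \<Longrightarrow> \<bar>Q a\<bar> \<le> c"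
    and p: "p \<in> borel_measurable M" "\<And>a. a \<in> A \<Longrightarrow> 0 \<le> p a" "set_integrable M A p"
  shows "set_integrable M A (\<lambda>a. Q a * p a)"
proof (rule set_integrable_bound[where f="\<lambda>a. c * p a"])
  show "set_integrable M A (\<lambda>a. c * p a)"
    using p(3) by simp
  have "(\<lambda>x. indicator A x *\<^sub>R Q x) \<in> borel_measurable M"
    using Q A by (subst (asm) borel_measurable_restrict_space_iff) auto
  then have "(\<lambda>x. (indicator A x *\<^sub>R Q x) * p x) \<in> borel_measurable M"
    using p(1) by (rule borel_measurable_times)
  then show "set_borel_measurable M A (\<lambda>a. Q a * p a)"
    unfolding set_borel_measurable_def by (simp add: mult.assoc)
  show "AE a in M. a \<in> A \<longrightarrow> norm (Q a * p a) \<le> norm (c * p a)"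
    using Q_bound p(2)
    by (auto intro!: AE_I2 mult_right_mono simp: abs_mult) (metis Q_bound abs_ge_self order_trans)
qed

lemma abs_set_integral_mult_density_le:
  fixes Q p :: "'a \<Rightarrow> real"
  assumes A: "A \<in> sets M" and Q: "Q \<in> borel_measurable (restrict_space M A)"
    and Q_bound: "\<And>a. a \<in> A \<Longrightarrow> \<bar>Q a\<bar> \<le> c"
    and p: "p \<in> borel_measurable M" "\<And>a. a \<in> A \<Longrightarrow> 0 \<le> p a" "set_integrable M A p"
      "(LINT a:A|M. p a) = 1"
  shows "\<bar>LINT a:A|M. Q a * p a\<bar> \<le> c"
proof -
  have Qp: "set_integrable M A (\<lambda>a. Q a * p a)"
    using set_integrable_mult_density[OF A Q Q_bound p(1-3)] .
  have "(LINT a:A|M. Q a * p a) \<le> (LINT a:A|M. c * p a)"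
    using Q_bound p(2)
    by (intro set_integral_mono Qp) (auto simp: p(3) abs_le_iff intro: mult_right_mono)
  moreover have "(LINT a:A|M. (- c) * p a) \<le> (LINT a:A|M. Q a * p a)"
  proof (intro set_integral_mono Qp)
    show "set_integrable M A (\<lambda>a. (- c) * p a)"
      using p(3) by (rule set_integrable_mult_right)
    show "(- c) * p a \<le> Q a * p a" if "a \<in> A" for a
      using Q_bound[OF that] p(2)[OF that] by (intro mult_right_mono) auto
  qed
  ultimately show ?thesis
    using p(4) set_integral_mult_right[where M=M and A=A and f=p and a="- c"]
    by (simp add: abs_le_iff)
qed

lemma dens_C_probability_density:
  assumes "p \<in> dens_C A C"
  shows "p \<in> borel_measurable lborel" and "\<And>a. a \<in> A \<Longrightarrow> 0 \<le> p a"
    and "set_integrable lborel A p" and "(LINT a:A|lborel. p a) = 1"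
  using assms by (auto simp: dens_C_def)

lemma Pol_dens_C: "\<pi> \<in> Pol M A C \<Longrightarrow> s \<in> space M \<Longrightarrow> \<pi> s \<in> dens_C A C"
  by (simp add: Pol_def)

lemma dens_C_square_integral:
  assumes A: "A \<in> sets lborel" and p: "p \<in> dens_C A C"
  shows "set_integrable lborel A (\<lambda>a. (p a)\<^sup>2)"
    and "0 \<le> (LINT a:A|lborel. (p a)\<^sup>2)" and "(LINT a:A|lborel. (p a)\<^sup>2) \<le> C"
proof -
  have p_meas: "p \<in> borel_measurable lborel" and p_bound: "\<And>a. a \<in> A \<Longrightarrow> 0 \<le> p a \<and> p a \<le> C"
    and p_int: "set_integrable lborel A p" and p_total: "(LINT a:A|lborel. p a) = 1"
    using p by (auto simp: dens_C_def)
  have square_le: "(p a)\<^sup>2 \<le> C * p a" if "a \<in> A" for a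
    using p_bound[OF that] by (simp add: power2_eq_square mult_right_mono)
  show square_int: "set_integrable lborel A (\<lambda>a. (p a)\<^sup>2)"
  proof (rule set_integrable_bound[where f="\<lambda>a. C * p a"])
    show "set_integrable lborel A (\<lambda>a. C * p a)"
      using p_int by simp
    show "set_borel_measurable lborel A (\<lambda>a. (p a)\<^sup>2)"
      unfolding set_borel_measurable_def using p_meas A by measurable
    show "AE a in lborel. a \<in> A \<longrightarrow> norm ((p a)\<^sup>2) \<le> norm (C * p a)"
      by (auto intro!: AE_I2 intro: order_trans[OF square_le abs_ge_self])
  qed
  show "0 \<le> (LINT a:A|lborel. (p a)\<^sup>2)"
    using set_integral_mono[OF set_integrable_mult_right[OF p_int, of 0] square_int] by simp
  have "(LINT a:A|lborel. (p a)\<^sup>2) \<le> (LINT a:A|lborel. C * p a)"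
    using square_le by (intro set_integral_mono square_int) (simp_all add: p_int)
  then show "(LINT a:A|lborel. (p a)\<^sup>2) \<le> C"
    using p_total by simp
qed

lemma regularized_objective_gap:
  fixes Q p :: "real \<Rightarrow> real"
  assumes A: "A \<in> sets lborel" and p: "p \<in> dens_C A C"
    and Qp: "set_integrable lborel A (\<lambda>a. Q a * p a)" and "0 \<le> \<mu>"
  shows "\<bar>(LINT a:A|lborel. Q a * p a + \<mu> * (p a - (p a)\<^sup>2)) - (LINT a:A|lborel. Q a * p a)\<bar>
           \<le> \<mu> * max \<bar>1 - C\<bar> 1"
proof -
  note p_int = dens_C_probability_density(3)[OF p]
    and p_total = dens_C_probability_density(4)[OF p]
  note square = dens_C_square_integral[OF A p]
  have "(LINT a:A|lborel. Q a * p a + \<mu> * (p a - (p a)\<^sup>2)) - (LINT a:A|lborel. Q a * p a)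
          = \<mu> * (1 - (LINT a:A|lborel. (p a)\<^sup>2))"
    using Qp p_int square(1) p_total by simp
  also have "\<bar>\<dots>\<bar> \<le> \<mu> * max \<bar>1 - C\<bar> 1"
    using square(2,3) \<open>0 \<le> \<mu>\<close> by (auto simp: abs_mult intro!: mult_left_mono)
  finally show ?thesis .
qed

locale bounded_reward_mdp =
  fixes M :: "'s measure" and A :: "real set" and P :: "'s \<Rightarrow> real \<Rightarrow> 's measure"
    and R :: "'s \<Rightarrow> 's \<Rightarrow> real \<Rightarrow> real" and \<gamma> :: real
  assumes A_meas: "A \<in> sets lborel"
    and kernel: "\<And>s. s \<in> space M \<Longrightarrow> P s \<in> restrict_space lborel A \<rightarrow>\<^sub>M prob_algebra M"
    and R_meas: "\<And>s. s \<in> space M \<Longrightarrow> (\<lambda>(s', a). R s' s a) \<in> borel_measurable (M \<Otimes>\<^sub>M lborel)"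
    and R_bounded: "\<exists>K. \<forall>s'\<in>space M. \<forall>s\<in>space M. \<forall>a\<in>A. \<bar>R s' s a\<bar> \<le> K"
    and discount_nonneg: "0 \<le> \<gamma>"
begin

lemma P_in_prob_algebra: "s \<in> space M \<Longrightarrow> a \<in> A \<Longrightarrow> P s a \<in> space (prob_algebra M)"
  using measurable_space[OF kernel] by (auto simp: space_restrict_space)

lemma prob_space_P: "s \<in> space M \<Longrightarrow> a \<in> A \<Longrightarrow> prob_space (P s a)"
  using P_in_prob_algebra by (simp add: space_prob_algebra)

lemma sets_P: "s \<in> space M \<Longrightarrow> a \<in> A \<Longrightarrow> sets (P s a) = sets M"
  using P_in_prob_algebra by (simp add: space_prob_algebra)

lemma space_P: "s \<in> space M \<Longrightarrow> a \<in> A \<Longrightarrow> space (P s a) = space M"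
  using sets_P by (rule sets_eq_imp_space_eq)

lemma Qfun_integrand_measurable:
  assumes V: "V \<in> borel_measurable M" and s: "s \<in> space M"
  shows "(\<lambda>(a, s'). R s' s a + \<gamma> * V s') \<in> borel_measurable (restrict_space lborel A \<Otimes>\<^sub>M M)"
proof -
  have "(\<lambda>x. x) \<in> restrict_space lborel A \<rightarrow>\<^sub>M lborel"
    by (rule measurable_restrict_space1) simp
  then have swap: "(\<lambda>x. (snd x, fst x)) \<in> restrict_space lborel A \<Otimes>\<^sub>M M \<rightarrow>\<^sub>M M \<Otimes>\<^sub>M lborel"
    by (intro measurable_Pair measurable_snd measurable_compose[OF measurable_fst])
  have "(\<lambda>x. (\<lambda>(s', a). R s' s a) (snd x, fst x) + \<gamma> * V (snd x))
          \<in> borel_measurable (restrict_space lborel A \<Otimes>\<^sub>M M)"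
    by (intro borel_measurable_add borel_measurable_times borel_measurable_const
          measurable_compose[OF swap R_meas[OF s]] measurable_compose[OF measurable_snd V])
  then show ?thesis
    by (simp add: case_prod_beta')
qed

lemma Qfun_integrand_bounded:
  assumes "bounded (V ` space M)" and s: "s \<in> space M"
  obtains B where "\<And>s' a. s' \<in> space M \<Longrightarrow> a \<in> A \<Longrightarrow> \<bar>R s' s a + \<gamma> * V s'\<bar> \<le> B"
proof -
  obtain K where K: "\<And>s' a. s' \<in> space M \<Longrightarrow> a \<in> A \<Longrightarrow> \<bar>R s' s a\<bar> \<le> K"
    using R_bounded s by blast
  obtain B where B: "\<And>s'. s' \<in> space M \<Longrightarrow> \<bar>V s'\<bar> \<le> B"
    using assms(1) by (auto simp: bounded_iff)
  have "\<bar>R s' s a + \<gamma> * V s'\<bar> \<le> K + \<gamma> * B" if "s' \<in> space M" "a \<in> A" for s' a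
  proof -
    have "\<bar>R s' s a + \<gamma> * V s'\<bar> \<le> \<bar>R s' s a\<bar> + \<gamma> * \<bar>V s'\<bar>"
      using discount_nonneg by (simp add: abs_mult abs_triangle_ineq[THEN order_trans])
    also have "\<dots> \<le> K + \<gamma> * B"
      using K[OF that] B[OF that(1)] discount_nonneg by (intro add_mono mult_left_mono)
    finally show ?thesis .
  qed
  then show thesis
    by (rule that)
qed

lemma Qfun_integrand_measurable_P:
  assumes V: "V \<in> borel_measurable M" and s: "s \<in> space M" and a: "a \<in> A"
  shows "(\<lambda>s'. R s' s a + \<gamma> * V s') \<in> borel_measurable (P s a)"
proof -
  note R_meas[OF s, measurable] V[measurable]
  have "(\<lambda>s'. (\<lambda>(s', a). R s' s a) (s', a) + \<gamma> * V s') \<in> borel_measurable M"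
    by measurable
  then show ?thesis
    using sets_P[OF s a] by (simp cong: measurable_cong_sets)
qed

lemma integrable_Qfun_integrand:
  assumes V: "V \<in> borel_measurable M" "bounded (V ` space M)"
    and s: "s \<in> space M" and a: "a \<in> A"
  shows "integrable (P s a) (\<lambda>s'. R s' s a + \<gamma> * V s')"
proof -
  obtain B where "\<And>s'. s' \<in> space M \<Longrightarrow> \<bar>R s' s a + \<gamma> * V s'\<bar> \<le> B"
    using Qfun_integrand_bounded[OF V(2) s] a by metis
  then show ?thesis
    using prob_space.abs_integral_le_const(1)[OF prob_space_P[OF s a]
        Qfun_integrand_measurable_P[OF V(1) s a]]
    by (metis space_P[OF s a])
qed

lemma Qfun_bounded:
  assumes V: "V \<in> borel_measurable M" "bounded (V ` space M)" and s: "s \<in> space M"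
  obtains B where "\<And>a. a \<in> A \<Longrightarrow> \<bar>Qfun P R \<gamma> V s a\<bar> \<le> B"
proof -
  obtain B where "\<And>s' a. s' \<in> space M \<Longrightarrow> a \<in> A \<Longrightarrow> \<bar>R s' s a + \<gamma> * V s'\<bar> \<le> B"
    using Qfun_integrand_bounded[OF V(2) s] by metis
  then have "\<bar>Qfun P R \<gamma> V s a\<bar> \<le> B" if "a \<in> A" for a
    unfolding Qfun_def
    using prob_space.abs_integral_le_const(2)[OF prob_space_P[OF s that]
        Qfun_integrand_measurable_P[OF V(1) s that]]
    by (simp add: space_P[OF s that] that)
  then show thesis
    by (rule that)
qed

lemma Qfun_measurable:
  assumes V: "V \<in> borel_measurable M" and s: "s \<in> space M"
  shows "Qfun P R \<gamma> V s \<in> borel_measurable (restrict_space lborel A)"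
  unfolding Qfun_def[abs_def]
  using Qfun_integrand_measurable[OF V s] measurable_prob_algebraD[OF kernel[OF s]]
  by (rule integral_measurable_subprob_algebra2)

lemma Qfun_diff_le:
  assumes V: "V \<in> borel_measurable M" "bounded (V ` space M)"
    and W: "W \<in> borel_measurable M" "bounded (W ` space M)"
    and D: "\<And>s'. s' \<in> space M \<Longrightarrow> \<bar>V s' - W s'\<bar> \<le> D"
    and s: "s \<in> space M" and a: "a \<in> A"
  shows "\<bar>Qfun P R \<gamma> V s a - Qfun P R \<gamma> W s a\<bar> \<le> \<gamma> * D"
proof -
  have "Qfun P R \<gamma> V s a - Qfun P R \<gamma> W s a = (\<integral>s'. \<gamma> * (V s' - W s') \<partial>P s a)"
    unfolding Qfun_def
    using Bochner_Integration.integral_diff[OF integrable_Qfun_integrand[OF V s a]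
        integrable_Qfun_integrand[OF W s a]]
    by (simp add: algebra_simps)
  also have "\<bar>\<dots>\<bar> \<le> \<gamma> * D"
  proof (rule prob_space.abs_integral_le_const(2)[OF prob_space_P[OF s a]])
    show "(\<lambda>s'. \<gamma> * (V s' - W s')) \<in> borel_measurable (P s a)"
      using V(1) W(1) sets_P[OF s a] by (simp cong: measurable_cong_sets)
    show "\<bar>\<gamma> * (V s' - W s')\<bar> \<le> \<gamma> * D" if "s' \<in> space (P s a)" for s'
      using D[of s'] that discount_nonneg by (simp add: space_P[OF s a] abs_mult mult_left_mono)
  qed
  finally show ?thesis .
qed

lemma set_integrable_policy_value:
  assumes V: "V \<in> borel_measurable M" "bounded (V ` space M)"
    and s: "s \<in> space M" and \<pi>: "\<pi> \<in> Pol M A C"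
  shows "set_integrable lborel A (\<lambda>a. Qfun P R \<gamma> V s a * \<pi> s a)"
proof -
  obtain B where "\<And>a. a \<in> A \<Longrightarrow> \<bar>Qfun P R \<gamma> V s a\<bar> \<le> B"
    using Qfun_bounded[OF V s] by blast
  then show ?thesis
    using set_integrable_mult_density[OF A_meas Qfun_measurable[OF V(1) s]]
      dens_C_probability_density(1-3)[OF Pol_dens_C[OF \<pi> s]]
    by blast
qed

lemma bdd_above_policy_values:
  assumes V: "V \<in> borel_measurable M" "bounded (V ` space M)" and s: "s \<in> space M"
  shows "bdd_above ((\<lambda>\<pi>. LINT a:A|lborel. Qfun P R \<gamma> V s a * \<pi> s a) ` Pol M A C)"
proof -
  obtain B where B: "\<And>a. a \<in> A \<Longrightarrow> \<bar>Qfun P R \<gamma> V s a\<bar> \<le> B"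
    using Qfun_bounded[OF V s] by blast
  have "\<bar>LINT a:A|lborel. Qfun P R \<gamma> V s a * \<pi> s a\<bar> \<le> B" if "\<pi> \<in> Pol M A C" for \<pi>
    using abs_set_integral_mult_density_le[OF A_meas Qfun_measurable[OF V(1) s] B]
      dens_C_probability_density[OF Pol_dens_C[OF that s]]
    by blast
  then show ?thesis
    by (intro bdd_aboveI2[where M=B]) (simp add: abs_le_iff)
qed

lemma Bmu_Bop_diff_le:
  assumes Pol: "Pol M A C \<noteq> {}" and "0 \<le> \<mu>"
    and V: "V \<in> borel_measurable M" "bounded (V ` space M)" and s: "s \<in> space M"
  shows "\<bar>Bmu M A C P R \<gamma> \<mu> V s - Bop M A C P R \<gamma> V s\<bar> \<le> \<mu> * max \<bar>1 - C\<bar> 1"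
  unfolding Bmu_def Bop_def
  using bdd_above_policy_values[OF V s]
    regularized_objective_gap[OF A_meas Pol_dens_C[OF _ s] set_integrable_policy_value[OF V s] \<open>0 \<le> \<mu>\<close>]
  by (rule cSUP_abs_diff_le[OF Pol])

lemma Bop_diff_le:
  assumes Pol: "Pol M A C \<noteq> {}"
    and V: "V \<in> borel_measurable M" "bounded (V ` space M)"
    and W: "W \<in> borel_measurable M" "bounded (W ` space M)"
    and D: "\<And>s'. s' \<in> space M \<Longrightarrow> \<bar>V s' - W s'\<bar> \<le> D" and s: "s \<in> space M"
  shows "\<bar>Bop M A C P R \<gamma> V s - Bop M A C P R \<gamma> W s\<bar> \<le> \<gamma> * D"
  unfolding Bop_def
proof (rule cSUP_abs_diff_le[OF Pol bdd_above_policy_values[OF W s]])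
  fix \<pi> assume \<pi>: "\<pi> \<in> Pol M A C"
  have "(LINT a:A|lborel. Qfun P R \<gamma> V s a * \<pi> s a)
        - (LINT a:A|lborel. Qfun P R \<gamma> W s a * \<pi> s a)
      = (LINT a:A|lborel. (Qfun P R \<gamma> V s a - Qfun P R \<gamma> W s a) * \<pi> s a)"
    using set_integrable_policy_value[OF V s \<pi>] set_integrable_policy_value[OF W s \<pi>]
    by (simp add: left_diff_distrib)
  also have "\<bar>\<dots>\<bar> \<le> \<gamma> * D"
    using abs_set_integral_mult_density_le[OF A_meas
        borel_measurable_diff[OF Qfun_measurable[OF V(1) s] Qfun_measurable[OF W(1) s]]
        Qfun_diff_le[OF V W D s]]
      dens_C_probability_density[OF Pol_dens_C[OF \<pi> s]]
    by blast
  finally show "\<bar>(LINT a:A|lborel. Qfun P R \<gamma> V s a * \<pi> s a)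
      - (LINT a:A|lborel. Qfun P R \<gamma> W s a * \<pi> s a)\<bar> \<le> \<gamma> * D" .
qed

end

theorem propositionS2:
  fixes M :: "'s measure" and A :: "real set" and C \<gamma> \<mu> :: real
    and P :: "'s \<Rightarrow> real \<Rightarrow> 's measure" and R :: "'s \<Rightarrow> 's \<Rightarrow> real \<Rightarrow> real"
    and Vmu Vstar :: "'s \<Rightarrow> real"
  assumes A_meas: "A \<in> sets lborel"
    and kernel: "\<forall>s\<in>space M. (\<lambda>a. P s a) \<in> measurable (restrict_space lborel A) (prob_algebra M)"
    and R_meas: "\<forall>s\<in>space M. (\<lambda>(s', a). R s' s a) \<in> borel_measurable (M \<Otimes>\<^sub>M lborel)"
    and R_bdd: "\<exists>K. \<forall>s'\<in>space M. \<forall>s\<in>space M. \<forall>a\<in>A. \<bar>R s' s a\<bar> \<le> K"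
    and gamma: "0 \<le> \<gamma>" "\<gamma> < 1"
    and mu: "\<mu> > 0"
    and Vmu_meas: "Vmu \<in> borel_measurable M" and Vmu_bdd: "bounded (Vmu ` space M)"
    and Vmu_fix: "\<forall>s\<in>space M. Bmu M A C P R \<gamma> \<mu> Vmu s = Vmu s"
    and Vstar_meas: "Vstar \<in> borel_measurable M" and Vstar_bdd: "bounded (Vstar ` space M)"
    and Vstar_fix: "\<forall>s\<in>space M. Bop M A C P R \<gamma> Vstar s = Vstar s"
  shows "\<forall>s\<in>space M. \<bar>Vmu s - Vstar s\<bar> \<le> \<mu> * max \<bar>1 - C\<bar> 1 / (1 - \<gamma>)"
proof (cases "Pol M A C = {}")
  case True
  \<comment> \<open>Without admissible policies both operators return the junk value \<open>Sup {}\<close>.\<close>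
  then have "Vmu s = Vstar s" if "s \<in> space M" for s
    using Vmu_fix Vstar_fix that by (simp add: Bmu_def Bop_def)
  then show ?thesis
    using mu gamma by simp
next
  case False
  interpret bounded_reward_mdp M A P R \<gamma>
    using A_meas kernel R_meas R_bdd gamma(1) by unfold_locales auto
  have "bdd_above ((\<lambda>s. \<bar>Vmu s - Vstar s\<bar>) ` space M)"
    using bounded_minus_comp[OF Vmu_bdd Vstar_bdd] by (auto simp: bounded_iff bdd_above_def)
  then show ?thesis
  proof (rule bound_from_contraction_inequality[OF _ gamma(2)])
    fix D assume D: "\<forall>s\<in>space M. \<bar>Vmu s - Vstar s\<bar> \<le> D"
    show "\<forall>s\<in>space M. \<bar>Vmu s - Vstar s\<bar> \<le> \<mu> * max \<bar>1 - C\<bar> 1 + \<gamma> * D"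
      using Bmu_Bop_diff_le[OF False less_imp_le[OF mu] Vmu_meas Vmu_bdd]
        Bop_diff_le[OF False Vmu_meas Vmu_bdd Vstar_meas Vstar_bdd] D Vmu_fix Vstar_fix
      by (smt (verit))
  qed
qed

end
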